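(* Let $p$ be a prime and $G$ a finite Abelian $p$-group. For each non-cyclic subgroup $G'\le G$ choose a subgroup $L'<G'$ with $G'/L'\cong C_p\times C_p$. For each such $G'$ and each homomorphism $\rho:G'\to C_p$ (trivial or not) put $$\Theta_{G',\rho}=L'\times\rho|_{L'}-\sum_{L'<C'<G',\ [C':L']=p} C'\times\rho|_{C'}+p\,(G'\times\rho)\in B(G\times C_p).$$ Then $K(G,C_p)[\tfrac1p]=\mathbb Z[\tfrac1p]\otimes K(G,C_p)$ is a free $\mathbb Z[\tfrac1p]$-module with basis the elements $\Theta_{G',\rho}$, where $G'$ ranges over the non-cyclic subgroups of $G$ and $\rho$ over all homomorphisms $G'\to C_p$. In particular $\operatorname{rank}K(G,C_p)$ equals the number of such pairs $(G',\rho)$.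
   Context: $B(G\times C_p)$ is the Burnside ring of the Abelian group $G\times C_p$, free Abelian with basis its subgroups. For $K\le G$ and a homomorphism $\rho:K\to C_p$, $K\times\rho=\{(k,\rho(k)):k\in K\}$ is its graph. $B(G,C_p)\subset B(G\times C_p)$ is spanned by all graphs. $f:B(G\times C_p)\to R_{\mathbb Q}(G\times C_p)$ sends a subgroup $S$ to $[\mathbb Q[(G\times C_p)/S]]$, $K(G\times C_p)=\ker f$, and $K(G,C_p)=K(G\times C_p)\cap B(G,C_p)$ is the module of relative Brauer relations. *)

theory Defs
  imports "HOL-Algebra.Algebra"
begin

abbreviation Cp :: "nat \<Rightarrow> int monoid" where
  "Cp p \<equiv> integer_mod_group p"

text \<open>Homomorphisms from a subgroup K of G to C_p, as functions that vanish
  outside K (so that distinct functions are distinct homomorphisms).\<close>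
definition homs_to_Cp :: "('a, 'b) monoid_scheme \<Rightarrow> nat \<Rightarrow> 'a set \<Rightarrow> ('a \<Rightarrow> int) set" where
  "homs_to_Cp G p K = {\<rho>. \<rho> \<in> hom (subgroup_generated G K) (Cp p) \<and> (\<forall>x. x \<notin> K \<longrightarrow> \<rho> x = 0)}"

definition graph_sub :: "'a set \<Rightarrow> ('a \<Rightarrow> int) \<Rightarrow> ('a \<times> int) set" where
  "graph_sub K \<rho> = {(k, \<rho> k) | k. k \<in> K}"

text \<open>Elements of the Burnside ring B(Y) of a finite group Y: integer
  combinations of subgroups, i.e. integer functions on the set of subgroups
  (supported on subgroups).\<close>
definition burnside :: "('c, 'd) monoid_scheme \<Rightarrow> ('c set \<Rightarrow> int) set" where
  "burnside Y = {b. \<forall>S. b S \<noteq> 0 \<longrightarrow> subgroup S Y}"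

definition bsub :: "'c set \<Rightarrow> ('c set \<Rightarrow> int)" where
  "bsub S = (\<lambda>T. if T = S then 1 else 0)"

text \<open>Character of the permutation representation Q[Y/S] at x: the number
  of cosets fixed by x.\<close>
definition perm_char :: "('c, 'd) monoid_scheme \<Rightarrow> 'c set \<Rightarrow> 'c \<Rightarrow> nat" where
  "perm_char Y S x = card {C \<in> rcosets\<^bsub>Y\<^esub> S. x <#\<^bsub>Y\<^esub> C = C}"

text \<open>K(Y) = ker (B(Y) \<rightarrow> R_Q(Y)): elements whose image, a virtual rational
  representation, has zero character.\<close>
definition brauer_rel :: "('c, 'd) monoid_scheme \<Rightarrow> ('c set \<Rightarrow> int) set" where
  "brauer_rel Y = {b \<in> burnside Y.
     \<forall>x \<in> carrier Y. (\<Sum>S \<in> {S. subgroup S Y}. b S * int (perm_char Y S x)) = 0}"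

definition rel_burnside :: "('a, 'b) monoid_scheme \<Rightarrow> nat \<Rightarrow> (('a \<times> int) set \<Rightarrow> int) set" where
  "rel_burnside G p = {b \<in> burnside (G \<times>\<times> Cp p).
     \<forall>T. b T \<noteq> 0 \<longrightarrow> (\<exists>K \<rho>. subgroup K G \<and> \<rho> \<in> homs_to_Cp G p K \<and> T = graph_sub K \<rho>)}"

definition rel_brauer :: "('a, 'b) monoid_scheme \<Rightarrow> nat \<Rightarrow> (('a \<times> int) set \<Rightarrow> int) set" where
  "rel_brauer G p = brauer_rel (G \<times>\<times> Cp p) \<inter> rel_burnside G p"

definition int_lin_indep_fam :: "'i set \<Rightarrow> ('i \<Rightarrow> 'c \<Rightarrow> int) \<Rightarrow> bool" where
  "int_lin_indep_fam I v \<longleftrightarrow>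
     (\<forall>c. (\<forall>T. (\<Sum>i\<in>I. c i * v i T) = 0) \<longrightarrow> (\<forall>i\<in>I. c i = 0))"

definition zrank :: "('c \<Rightarrow> int) set \<Rightarrow> nat" where
  "zrank M = Max {card S | S. finite S \<and> S \<subseteq> M \<and> int_lin_indep_fam S (\<lambda>v. v)}"

definition p_group :: "('a, 'b) monoid_scheme \<Rightarrow> nat \<Rightarrow> bool" where
  "p_group G p \<longleftrightarrow> finite (carrier G) \<and> (\<exists>n. card (carrier G) = p ^ n)"

definition Theta :: "('a, 'b) monoid_scheme \<Rightarrow> nat \<Rightarrow> ('a set \<Rightarrow> 'a set)
     \<Rightarrow> 'a set \<Rightarrow> ('a \<Rightarrow> int) \<Rightarrow> (('a \<times> int) set \<Rightarrow> int)" where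
  "Theta G p L G' \<rho> = (\<lambda>T.
      bsub (graph_sub (L G') \<rho>) T
      - (\<Sum>C' \<in> {C'. subgroup C' G \<and> L G' \<subset> C' \<and> C' \<subset> G' \<and> card C' = p * card (L G')}.
            bsub (graph_sub C' \<rho>) T)
      + int p * bsub (graph_sub G' \<rho>) T)"

definition theta_pairs :: "('a, 'b) monoid_scheme \<Rightarrow> nat \<Rightarrow> ('a set \<times> ('a \<Rightarrow> int)) set" where
  "theta_pairs G p = {(G', \<rho>). subgroup G' G \<and> \<not> cyclic_group (subgroup_generated G G')
                                \<and> \<rho> \<in> homs_to_Cp G p G'}"

end

theory Submission
  imports Defs "HOL-Library.Function_Algebras"
begin

text \<open>At (g, t) the character of
  \<rat>[(G \<times> C_p)/(K \<times> \<rho>)] is |G \<times> C_p|/|K| if g \<in> K and t = \<rho> g, and 0 otherwise. So for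
  t = \<rho> g the character of \<Theta>_{G',\<rho>} at (g, t) is |G \<times> C_p|/(p |L'|) times
  p [g \<in> L'] - (number of C' containing g) + [g \<in> G'], which vanishes: g lies in all p + 1
  of the C' if g \<in> L', in exactly one (namely L'\<langle>g\<rangle>) if g \<in> G' - L', and in none otherwise.

  Ordered by the order of the subgroup, the \<Theta>'s are triangular with diagonal p: among the
  graphs of subgroups of order at least |G'|, \<Theta>_{G',\<rho>} only meets G' \<times> \<rho>, with
  coefficient p. This gives independence, and for a relative relation b it lets one cancel the
  non-cyclic graphs of maximal order in p b by a combination of \<Theta>'s. Iterating, p^k b minus a combination of
  \<Theta>'s is a Brauer relation supported on graphs of cyclic subgroups, which are cyclic; such a
  relation of an abelian group vanishes (evaluate it at a generator of a maximal one). The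
  rank is then computed over \<rat>.\<close>

section \<open>Permutation characters and Brauer relations\<close>

lemma finite_subgroups: "finite (carrier Y) \<Longrightarrow> finite {S. subgroup S Y}"
  by (rule finite_subset[of _ "Pow (carrier Y)"]) (auto dest: subgroup.subset)

lemma sum_subgroups_bsub:
  assumes "finite (carrier Y)" "subgroup T Y"
  shows "(\<Sum>S \<in> {S. subgroup S Y}. bsub T S * f S) = f T"
proof -
  have "(\<Sum>S \<in> {S. subgroup S Y}. bsub T S * f S) = (\<Sum>S \<in> {S. subgroup S Y}. if T = S then f S else 0)"
    by (rule sum.cong) (auto simp: bsub_def)
  also have "\<dots> = f T" using finite_subgroups[OF assms(1)] assms(2) by simp
  finally show ?thesis .
qed

text \<open>In an abelian group x <# (S #> a) = (S #> x) #> a, so x fixes one coset iff it fixes all,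
  iff x \<in> S.\<close>
lemma (in comm_group) perm_char_eq:
  assumes S: "subgroup S G" and x: "x \<in> carrier G"
  shows "perm_char G S x = (if x \<in> S then card (rcosets S) else 0)"
proof -
  have Ssub: "S \<subseteq> carrier G" using S subgroup.subset by blast
  have fixed_iff: "x <# C = C \<longleftrightarrow> x \<in> S" if C: "C \<in> rcosets S" for C
  proof -
    obtain a where a: "a \<in> carrier G" "C = S #> a" using C by (auto simp: RCOSETS_def)
    have "x <# S = S #> x"
      unfolding l_coset_def r_coset_def using Ssub x m_comm by blast
    then have xC: "x <# C = (S #> x) #> a"
      using coset_assoc[OF x a(1) Ssub] a(2) by simp
    have cancel: "(S #> y) #> a #> inv a = S #> y" if "y \<in> carrier G" for y
      using a(1) that Ssub by (simp add: coset_mult_assoc m_assoc)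
    have "x <# C = C \<longleftrightarrow> S #> x = S"
      using xC a(2) cancel[OF x] cancel[OF one_closed] Ssub by (metis coset_mult_one)
    also have "\<dots> \<longleftrightarrow> x \<in> S"
      using rcos_self[OF x S] coset_join2[OF x S] by blast
    finally show ?thesis .
  qed
  then have "{C \<in> rcosets S. x <# C = C} = (if x \<in> S then rcosets S else {})"
    by auto
  then show ?thesis by (simp add: perm_char_def)
qed

lemma brauer_rel_combination:
  assumes b: "b \<in> brauer_rel Y" and v: "\<forall>i\<in>I. v i \<in> brauer_rel Y"
  shows "(\<lambda>T. n * b T - (\<Sum>i\<in>I. c i * v i T)) \<in> brauer_rel Y"
  unfolding brauer_rel_def
proof (intro CollectI conjI ballI)
  show "(\<lambda>T. n * b T - (\<Sum>i\<in>I. c i * v i T)) \<in> burnside Y"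
    unfolding burnside_def
  proof (intro CollectI allI impI)
    fix T assume "n * b T - (\<Sum>i\<in>I. c i * v i T) \<noteq> 0"
    then have "b T \<noteq> 0 \<or> (\<exists>i\<in>I. v i T \<noteq> 0)"
      by (metis (no_types, lifting) diff_0_right mult_zero_left mult_zero_right sum.neutral)
    then show "subgroup T Y"
      using b v by (auto simp: brauer_rel_def burnside_def)
  qed
next
  fix x assume x: "x \<in> carrier Y"
  let ?\<chi> = "\<lambda>S. int (perm_char Y S x)"
  have "(\<Sum>S\<in>{S. subgroup S Y}. (n * b S - (\<Sum>i\<in>I. c i * v i S)) * ?\<chi> S) =
     n * (\<Sum>S\<in>{S. subgroup S Y}. b S * ?\<chi> S) - (\<Sum>i\<in>I. c i * (\<Sum>S\<in>{S. subgroup S Y}. v i S * ?\<chi> S))"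
    by (simp add: algebra_simps sum_subtractf sum_distrib_left sum_distrib_right sum.swap[of _ "{S. subgroup S Y}"])
  also have "\<dots> = 0"
    using b v x by (simp add: brauer_rel_def)
  finally show "(\<Sum>S\<in>{S. subgroup S Y}. (n * b S - (\<Sum>i\<in>I. c i * v i S)) * ?\<chi> S) = 0" .
qed

text \<open>Evaluate the character at a generator of a maximal cyclic subgroup in the support:
  among the subgroups in the support, only that one contains the generator.\<close>
lemma (in comm_group) brauer_rel_cyclic_support_eq_0:
  assumes fin: "finite (carrier G)" and b: "b \<in> brauer_rel G"
    and cyclic: "\<And>T. b T \<noteq> 0 \<Longrightarrow> \<exists>x\<in>carrier G. T = range (\<lambda>n::int. x [^] n)"
  shows "b T = 0"
proof (rule ccontr)
  assume "b T \<noteq> 0"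
  define supp where "supp = {T. b T \<noteq> 0}"
  have supp_subgroups: "supp \<subseteq> {S. subgroup S G}"
    using b by (auto simp: supp_def brauer_rel_def burnside_def)
  then have "finite supp"
    using finite_subgroups[OF fin] finite_subset by blast
  moreover have "supp \<noteq> {}" using \<open>b T \<noteq> 0\<close> by (auto simp: supp_def)
  ultimately obtain T0 where T0: "T0 \<in> supp" and maximal: "\<And>S. S \<in> supp \<Longrightarrow> T0 \<subseteq> S \<Longrightarrow> T0 = S"
    using finite_has_maximal by metis
  have "b T0 \<noteq> 0" using T0 by (simp add: supp_def)
  then obtain x where x: "x \<in> carrier G" and T0_eq: "T0 = range (\<lambda>n::int. x [^] n)"
    using cyclic by blast
  have T0_sub: "subgroup T0 G" using T0 supp_subgroups by blast
  have x_T0: "x \<in> T0" using T0_eq int_pow_1[OF x] by (metis rangeI)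
  have only_T0: "b S * int (perm_char G S x) = (if S = T0 then b T0 * int (card (rcosets T0)) else 0)"
    if S: "subgroup S G" for S
  proof (cases "b S \<noteq> 0 \<and> x \<in> S")
    case True
    then have "T0 \<subseteq> S" using T0_eq subgroup_int_pow_closed[OF S] by auto
    then have "S = T0" using maximal True by (auto simp: supp_def)
    then show ?thesis using perm_char_eq[OF T0_sub x] x_T0 by simp
  next
    case False
    then show ?thesis using perm_char_eq[OF S x] x_T0 by auto
  qed
  have "0 = (\<Sum>S\<in>{S. subgroup S G}. b S * int (perm_char G S x))"
    using b x by (simp add: brauer_rel_def)
  also have "\<dots> = b T0 * int (card (rcosets T0))"
    using only_T0 finite_subgroups[OF fin] T0_sub by (simp add: sum.cong[OF refl only_T0])
  finally have "b T0 * int (card (rcosets T0)) = 0" by simp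
  moreover have "card (rcosets T0) \<noteq> 0"
    using lagrange[OF T0_sub] fin one_closed by (metis card_0_eq empty_iff mult_eq_0_iff order_def)
  ultimately show False using \<open>b T0 \<noteq> 0\<close> by simp
qed

section \<open>Triangular families and the rank over \<int>\<close>

lemma sum_triangular:
  fixes w :: "'i \<Rightarrow> nat" and v :: "'i \<Rightarrow> 'c \<Rightarrow> int"
  assumes "finite I" "j \<in> I"
    and tri: "\<And>i. i \<in> I \<Longrightarrow> w i \<le> w j \<Longrightarrow> v i (e j) = (if i = j then d else 0)"
    and c: "\<And>i. i \<in> I \<Longrightarrow> c i \<noteq> 0 \<Longrightarrow> w i \<le> w j"
  shows "(\<Sum>i\<in>I. c i * v i (e j)) = c j * d"
proof -
  have "(\<Sum>i\<in>I. c i * v i (e j)) = (\<Sum>i\<in>I. if i = j then c j * d else 0)"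
    by (rule sum.cong) (use tri c in force)+
  also have "\<dots> = c j * d" using assms(1,2) by simp
  finally show ?thesis .
qed

lemma int_lin_indep_fam_triangular:
  fixes w :: "'i \<Rightarrow> nat" and v :: "'i \<Rightarrow> 'c \<Rightarrow> int"
  assumes "finite I" "d \<noteq> 0"
    and tri: "\<And>i j. i \<in> I \<Longrightarrow> j \<in> I \<Longrightarrow> w i \<le> w j \<Longrightarrow> v i (e j) = (if i = j then d else 0)"
  shows "int_lin_indep_fam I v"
  unfolding int_lin_indep_fam_def
proof (intro allI impI ballI, rule ccontr)
  fix c i
  assume zero: "\<forall>T. (\<Sum>i\<in>I. c i * v i T) = 0" and "i \<in> I" "c i \<noteq> 0"
  define Z where "Z = {i \<in> I. c i \<noteq> 0}"
  have "finite Z" "i \<in> Z" using assms(1) \<open>i \<in> I\<close> \<open>c i \<noteq> 0\<close> by (auto simp: Z_def)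
  then obtain j where j: "j \<in> Z" and "w j = Max (w ` Z)"
    using Max_in[of "w ` Z"] by fastforce
  then have top: "\<And>i. i \<in> Z \<Longrightarrow> w i \<le> w j"
    using \<open>finite Z\<close> by simp
  have "(\<Sum>i\<in>I. c i * v i (e j)) = c j * d"
  proof (rule sum_triangular[OF assms(1)])
    show "j \<in> I" using j by (simp add: Z_def)
    show "v i (e j) = (if i = j then d else 0)" if "i \<in> I" "w i \<le> w j" for i
      using tri[OF that(1) \<open>j \<in> I\<close> that(2)] .
    show "w i \<le> w j" if "i \<in> I" "c i \<noteq> 0" for i
      using top that by (simp add: Z_def)
  qed
  then show False using zero j assms(2) by (simp add: Z_def)
qed

lemma int_lin_indep_fam_inj_on:
  assumes "finite I" "int_lin_indep_fam I v"
  shows "inj_on v I"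
proof (rule inj_onI, rule ccontr)
  fix i j assume ij: "i \<in> I" "j \<in> I" "v i = v j" "i \<noteq> j"
  define c where "c k = (if k = i then 1 else if k = j then -1 else 0 :: int)" for k
  have "(\<Sum>k\<in>I. c k * v k T) = v i T - v j T" for T
  proof -
    have "(\<Sum>k\<in>I. c k * v k T) = (\<Sum>k\<in>I. (if k = i then v i T else 0) - (if k = j then v j T else 0))"
      by (rule sum.cong) (auto simp: c_def ij(4)[symmetric])
    then show ?thesis using assms(1) ij(1,2) by (simp add: sum_subtractf)
  qed
  then have "c i = 0" using assms(2) ij unfolding int_lin_indep_fam_def by simp
  then show False by (simp add: c_def)
qed

interpretation rat_fun: vector_space "\<lambda>(c::rat) (f::'c \<Rightarrow> rat). (\<lambda>x. c * f x)"
  by unfold_locales (simp_all add: fun_eq_iff algebra_simps)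

lemma common_denominator:
  fixes u :: "'c \<Rightarrow> rat"
  assumes "finite A"
  shows "\<exists>D::int. D > 0 \<and> (\<forall>x\<in>A. of_int D * u x \<in> \<int>)"
  using assms
proof (induction A rule: finite_induct)
  case empty
  show ?case by (intro exI[of _ 1]) simp
next
  case (insert x A)
  then obtain D :: int where D: "D > 0" "\<forall>y\<in>A. of_int D * u y \<in> \<int>" by blast
  obtain a b where ab: "quotient_of (u x) = (a, b)" by fastforce
  have "b > 0" using quotient_of_denom_pos[OF ab] .
  have "of_int b * u x \<in> \<int>"
    using quotient_of_div[OF ab] \<open>b > 0\<close> by simp
  have "of_int (D * b) * u y \<in> \<int>" if "y \<in> insert x A" for y
  proof (cases "y = x")
    case True
    have "of_int (D * b) * u x = of_int D * (of_int b * u x)" by simp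
    then show ?thesis using True Ints_mult[OF Ints_of_int \<open>of_int b * u x \<in> \<int>\<close>]
      by (simp only:)
  next
    case False
    have "of_int (D * b) * u y = of_int b * (of_int D * u y)" by simp
    then show ?thesis using False that D(2) Ints_mult[OF Ints_of_int] by (simp only:) simp
  qed
  then show ?case using D(1) \<open>b > 0\<close> by (intro exI[of _ "D * b"]) simp
qed

lemma sum_fun_apply: "(\<Sum>i\<in>A. f i) x = (\<Sum>i\<in>A. f i x)"
  by (induction A rule: infinite_finite_induct) auto

lemma rat_independent_of_int_lin_indep:
  fixes S :: "('c \<Rightarrow> int) set"
  assumes S: "finite S" and indep: "int_lin_indep_fam S (\<lambda>s. s)"
  shows "rat_fun.independent ((\<lambda>s x. of_int (s x) :: rat) ` S)"
proof (rule rat_fun.independent_if_scalars_zero)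
  let ?\<phi> = "\<lambda>s x. of_int (s x) :: rat"
  have inj: "inj ?\<phi>" by (rule injI) (simp add: fun_eq_iff)
  show "finite (?\<phi> ` S)" using S by simp
  fix f y
  assume zero: "(\<Sum>x\<in>?\<phi> ` S. (\<lambda>T. f x * x T)) = 0" and y: "y \<in> ?\<phi> ` S"
  obtain D :: int where "D > 0" and D: "\<forall>s\<in>S. of_int D * f (?\<phi> s) \<in> \<int>"
    using common_denominator[OF S, of "\<lambda>s. f (?\<phi> s)"] by blast
  have "\<forall>s\<in>S. \<exists>k::int. of_int D * f (?\<phi> s) = of_int k"
    using D by (auto elim!: Ints_cases)
  then obtain z where z: "\<forall>s\<in>S. of_int D * f (?\<phi> s) = of_int (z s)"
    by (metis bchoice)
  have "(\<Sum>s\<in>S. z s * s T) = 0" for T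
  proof -
    have "(of_int (\<Sum>s\<in>S. z s * s T) :: rat) = (\<Sum>s\<in>S. (of_int D * f (?\<phi> s)) * ?\<phi> s T)"
      using z by simp
    also have "\<dots> = of_int D * (\<Sum>s\<in>S. f (?\<phi> s) * ?\<phi> s T)"
      by (simp add: sum_distrib_left mult.assoc)
    also have "(\<Sum>s\<in>S. f (?\<phi> s) * ?\<phi> s T) = (\<Sum>x\<in>?\<phi> ` S. (\<lambda>T. f x * x T)) T"
      by (simp add: sum_fun_apply sum.reindex[OF inj_on_subset[OF inj subset_UNIV]])
    also have "\<dots> = 0" using zero by simp
    finally show ?thesis by (simp only: of_int_eq_0_iff)
  qed
  then have "\<forall>s\<in>S. z s = 0" using indep unfolding int_lin_indep_fam_def by blast
  moreover obtain s where "s \<in> S" "y = ?\<phi> s" using y by blast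
  ultimately have "of_int D * f y = 0" using z by auto
  then show "f y = 0" using \<open>D > 0\<close> by simp
qed

lemma card_le_of_int_lin_indep_in_span:
  fixes v :: "'i \<Rightarrow> 'c \<Rightarrow> int" and S :: "('c \<Rightarrow> int) set"
  assumes I: "finite I" and S: "finite S" and indep: "int_lin_indep_fam S (\<lambda>s. s)"
    and span: "\<And>s. s \<in> S \<Longrightarrow> \<exists>n c. n \<noteq> 0 \<and> (\<forall>T. n * s T = (\<Sum>i\<in>I. c i * v i T))"
  shows "card S \<le> card I"
proof -
  define \<phi> where "\<phi> s = (\<lambda>x. of_int (s x) :: rat)" for s :: "'c \<Rightarrow> int"
  have inj: "inj \<phi>" by (rule injI) (simp add: \<phi>_def fun_eq_iff)
  define B where "B = \<phi> ` v ` I"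
  have "\<phi> s \<in> rat_fun.span B" if "s \<in> S" for s
  proof -
    obtain n c where n: "n \<noteq> 0" and nc: "\<forall>T. n * s T = (\<Sum>i\<in>I. c i * v i T)"
      using span[OF \<open>s \<in> S\<close>] by blast
    have "\<phi> s = (\<Sum>i\<in>I. (\<lambda>T. (of_int (c i) / of_int n) * \<phi> (v i) T))"
    proof
      fix T
      have "of_int n * \<phi> s T = (\<Sum>i\<in>I. of_int (c i) * \<phi> (v i) T)"
        using arg_cong[OF nc[rule_format, of T], of "of_int :: int \<Rightarrow> rat"] by (simp add: \<phi>_def)
      then have "\<phi> s T = (\<Sum>i\<in>I. of_int (c i) * \<phi> (v i) T) / of_int n"
        using n by (simp add: eq_divide_eq mult.commute)
      then show "\<phi> s T = (\<Sum>i\<in>I. (\<lambda>T. (of_int (c i) / of_int n) * \<phi> (v i) T)) T"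
        by (simp add: sum_fun_apply sum_divide_distrib)
    qed
    also have "\<dots> \<in> rat_fun.span B"
    proof (rule rat_fun.span_sum)
      fix i assume "i \<in> I"
      then have "\<phi> (v i) \<in> rat_fun.span B" by (simp add: B_def rat_fun.span_base)
      then show "(\<lambda>T. (of_int (c i) / of_int n) * \<phi> (v i) T) \<in> rat_fun.span B"
        by (rule rat_fun.span_scale)
    qed
    finally show ?thesis .
  qed
  then have "\<phi> ` S \<subseteq> rat_fun.span B" by blast
  moreover have "rat_fun.independent (\<phi> ` S)"
    using rat_independent_of_int_lin_indep[OF S indep] by (simp add: \<phi>_def[abs_def])
  moreover have "finite B" using I by (simp add: B_def)
  ultimately have "card (\<phi> ` S) \<le> card B"
    using rat_fun.independent_span_bound[of B "\<phi> ` S"] by blast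
  also have "card B \<le> card I"
    unfolding B_def using I by (intro order_trans[OF card_image_le card_image_le]) simp_all
  finally show ?thesis
    using card_image[OF inj_on_subset[OF inj subset_UNIV]] by simp
qed

lemma zrank_eq_card:
  assumes I: "finite I" and vM: "v ` I \<subseteq> M" and indep: "int_lin_indep_fam I v"
    and span: "\<And>b. b \<in> M \<Longrightarrow> \<exists>n c. n \<noteq> 0 \<and> (\<forall>T. n * b T = (\<Sum>i\<in>I. c i * v i T))"
  shows "zrank M = card I"
proof -
  define W where "W = {card S | S. finite S \<and> S \<subseteq> M \<and> int_lin_indep_fam S (\<lambda>s. s)}"
  have bound: "\<forall>w\<in>W. w \<le> card I"
  proof
    fix w assume "w \<in> W"
    then obtain S where "w = card S" "finite S" "S \<subseteq> M" "int_lin_indep_fam S (\<lambda>s. s)"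
      by (auto simp: W_def)
    then show "w \<le> card I"
      using card_le_of_int_lin_indep_in_span[OF I, of S v] span by blast
  qed
  have inj: "inj_on v I" using int_lin_indep_fam_inj_on[OF I indep] .
  have "int_lin_indep_fam (v ` I) (\<lambda>s. s)"
    unfolding int_lin_indep_fam_def
  proof (intro allI impI ballI)
    fix c s assume zero: "\<forall>T. (\<Sum>s\<in>v ` I. c s * s T) = 0" and "s \<in> v ` I"
    have "\<forall>T. (\<Sum>i\<in>I. c (v i) * v i T) = 0"
      using zero by (simp add: sum.reindex[OF inj])
    moreover obtain i where "i \<in> I" "s = v i" using \<open>s \<in> v ` I\<close> by blast
    ultimately show "c s = 0"
      using indep[unfolded int_lin_indep_fam_def, rule_format, of "\<lambda>i. c (v i)"] by simp
  qed
  then have "card (v ` I) \<in> W"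
    unfolding W_def using I vM by blast
  then have "card I \<in> W" using card_image[OF inj] by simp
  moreover have "finite W" using bound finite_subset[of W "{..card I}"] by auto
  ultimately have "Max W = card I" using bound by (intro Max_eqI) auto
  then show ?thesis by (simp add: zrank_def W_def)
qed

section \<open>Graphs of homomorphisms to C_p\<close>

lemma comm_group_DirProd:
  assumes "comm_group A" "comm_group B"
  shows "comm_group (A \<times>\<times> B)"
proof -
  interpret A: comm_group A by (rule assms(1))
  interpret B: comm_group B by (rule assms(2))
  show ?thesis
    by (intro group.group_comm_groupI DirProd_group A.is_group B.is_group)
       (auto simp: A.m_comm B.m_comm)
qed

lemma comm_group_integer_mod_group: "comm_group (integer_mod_group n)"
  by (intro group.group_comm_groupI group_integer_mod_group) (simp add: add.commute)

lemma mem_graph_sub: "(g, t) \<in> graph_sub K \<rho> \<longleftrightarrow> g \<in> K \<and> t = \<rho> g"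
  by (auto simp: graph_sub_def)

lemma graph_sub_eq_image: "graph_sub K \<rho> = (\<lambda>k. (k, \<rho> k)) ` K"
  by (auto simp: graph_sub_def)

lemma fst_graph_sub: "fst ` graph_sub K \<rho> = K"
  by (force simp: graph_sub_eq_image)

lemma card_graph_sub: "card (graph_sub K \<rho>) = card K"
  unfolding graph_sub_eq_image by (rule card_image) (auto simp: inj_on_def)

lemma graph_sub_cong: "(\<And>x. x \<in> K \<Longrightarrow> \<rho> x = \<sigma> x) \<Longrightarrow> graph_sub K \<rho> = graph_sub K \<sigma>"
  by (auto simp: graph_sub_def)

lemma graph_sub_homs_to_Cp_eq_iff:
  assumes "\<rho> \<in> homs_to_Cp G p K" "\<sigma> \<in> homs_to_Cp G p K'"
  shows "graph_sub K \<rho> = graph_sub K' \<sigma> \<longleftrightarrow> K = K' \<and> \<rho> = \<sigma>"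
proof
  assume eq: "graph_sub K \<rho> = graph_sub K' \<sigma>"
  then have "K = K'" by (metis fst_graph_sub)
  moreover have "\<rho> x = \<sigma> x" for x
  proof (cases "x \<in> K")
    case True
    then show ?thesis using eq mem_graph_sub[of x "\<rho> x" K \<rho>] by (auto simp: mem_graph_sub)
  next
    case False
    then show ?thesis using assms \<open>K = K'\<close> by (simp add: homs_to_Cp_def)
  qed
  ultimately show "K = K' \<and> \<rho> = \<sigma>" by auto
qed simp

lemma (in group) hom_subgroup_generated_mono:
  assumes "subgroup K G" "subgroup K' G" "K \<subseteq> K'" "\<rho> \<in> hom (subgroup_generated G K') H"
  shows "\<rho> \<in> hom (subgroup_generated G K) H"
  using assms by (auto simp: hom_def subgroup.carrier_subgroup_generated_subgroup)

lemma (in group) graph_hom: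
  assumes "subgroup K G" "\<sigma> \<in> hom (subgroup_generated G K) H"
  shows "(\<lambda>k. (k, \<sigma> k)) \<in> hom (subgroup_generated G K) (G \<times>\<times> H)"
  using assms subgroup.subset[OF assms(1)]
  by (auto simp: hom_def subgroup.carrier_subgroup_generated_subgroup)

lemma (in group) subgroup_graph_sub:
  assumes "group H" "subgroup K G" "\<sigma> \<in> hom (subgroup_generated G K) H"
  shows "subgroup (graph_sub K \<sigma>) (G \<times>\<times> H)"
proof -
  have "group_hom (subgroup_generated G K) (G \<times>\<times> H) (\<lambda>k. (k, \<sigma> k))"
    using graph_hom[OF assms(2,3)] assms(1)
    by (simp add: group_hom_def group_hom_axioms_def DirProd_group is_group)
  then show ?thesis
    using group_hom.img_is_subgroup assms(2)
    by (fastforce simp: graph_sub_eq_image subgroup.carrier_subgroup_generated_subgroup)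
qed

lemma (in group) graph_sub_cyclic:
  assumes "group H" "subgroup K G" "\<sigma> \<in> hom (subgroup_generated G K) H"
    and "cyclic_group (subgroup_generated G K)"
  shows "\<exists>x\<in>carrier (G \<times>\<times> H). graph_sub K \<sigma> = range (\<lambda>n::int. x [^]\<^bsub>G \<times>\<times> H\<^esub> n)"
proof -
  let ?S = "subgroup_generated G K" and ?\<phi> = "\<lambda>k. (k, \<sigma> k)"
  interpret S: group ?S by simp
  have carrier_S: "carrier ?S = K"
    using subgroup.carrier_subgroup_generated_subgroup[OF assms(2)] .
  obtain g where g: "g \<in> K" and K_eq: "K = range (\<lambda>n::int. g [^]\<^bsub>?S\<^esub> n)"
    using S.cyclic_group assms(4) carrier_S by auto
  have hom: "?\<phi> \<in> hom ?S (G \<times>\<times> H)" using graph_hom[OF assms(2,3)] .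
  have "graph_sub K \<sigma> = range (\<lambda>n::int. ?\<phi> (g [^]\<^bsub>?S\<^esub> n))"
    unfolding graph_sub_eq_image by (subst K_eq) (simp add: image_image)
  also have "\<dots> = range (\<lambda>n::int. ?\<phi> g [^]\<^bsub>G \<times>\<times> H\<^esub> n)"
    using hom_int_pow[OF hom] g carrier_S assms(1) by (simp add: DirProd_group is_group)
  finally show ?thesis
    using hom g carrier_S by (intro bexI[of _ "?\<phi> g"]) (auto simp: hom_def)
qed

lemma (in group) homs_to_Cp_restrict:
  assumes "subgroup K G" "subgroup K' G" "K \<subseteq> K'" "\<rho> \<in> homs_to_Cp G p K'"
  shows "(\<lambda>x. if x \<in> K then \<rho> x else 0) \<in> homs_to_Cp G p K"
    and "graph_sub K (\<lambda>x. if x \<in> K then \<rho> x else 0) = graph_sub K \<rho>"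
proof -
  have "\<rho> \<in> hom (subgroup_generated G K) (Cp p)"
    using assms(4) by (intro hom_subgroup_generated_mono[OF assms(1-3)]) (simp add: homs_to_Cp_def)
  then have "(\<lambda>x. if x \<in> K then \<rho> x else 0) \<in> hom (subgroup_generated G K) (Cp p)"
    by (rule group.hom_restrict[OF group_subgroup_generated])
       (simp add: subgroup.carrier_subgroup_generated_subgroup[OF assms(1)])
  then show "(\<lambda>x. if x \<in> K then \<rho> x else 0) \<in> homs_to_Cp G p K"
    by (simp add: homs_to_Cp_def)
  show "graph_sub K (\<lambda>x. if x \<in> K then \<rho> x else 0) = graph_sub K \<rho>"
    by (rule graph_sub_cong) simp
qed

lemma (in group) subgroup_graph_sub_restrict:
  assumes "subgroup K G" "subgroup K' G" "K \<subseteq> K'" "\<rho> \<in> homs_to_Cp G p K'"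
  shows "subgroup (graph_sub K \<rho>) (G \<times>\<times> Cp p)"
  using assms(4)
  by (intro subgroup_graph_sub[OF group_integer_mod_group assms(1)] hom_subgroup_generated_mono[OF assms(1-3)])
     (simp add: homs_to_Cp_def)

text \<open>Stated after multiplying by |K| so that the index of the graph becomes |G \<times> C_p|.\<close>
lemma (in comm_group) perm_char_graph_sub:
  assumes "subgroup K G" "subgroup K' G" "K \<subseteq> K'" "\<rho> \<in> homs_to_Cp G p K'"
    and x: "(g, t) \<in> carrier (G \<times>\<times> Cp p)"
  shows "int (perm_char (G \<times>\<times> Cp p) (graph_sub K \<rho>) (g, t)) * int (card K) =
           (if g \<in> K \<and> t = \<rho> g then int (order (G \<times>\<times> Cp p)) else 0)"
proof -
  interpret Y: comm_group "G \<times>\<times> Cp p"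
    by (rule comm_group_DirProd[OF comm_group_axioms comm_group_integer_mod_group])
  have S: "subgroup (graph_sub K \<rho>) (G \<times>\<times> Cp p)"
    using subgroup_graph_sub_restrict[OF assms(1-4)] .
  show ?thesis
    using Y.perm_char_eq[OF S x] Y.lagrange[OF S]
    by (simp add: mem_graph_sub card_graph_sub flip: of_nat_mult)
qed

section \<open>Subgroups between L' and G'\<close>

lemma (in group) card_subgroup_dvd:
  assumes "subgroup A G" "subgroup B G" "A \<subseteq> B"
  shows "card A dvd card B"
proof -
  interpret B: group "subgroup_generated G B" by simp
  have "subgroup A (subgroup_generated G B)"
    using subgroup_of_subgroup_generated[OF assms(3,1)] .
  from B.lagrange[OF this] show ?thesis
    using assms(2) by (metis dvd_triv_right order_def subgroup.carrier_subgroup_generated_subgroup)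
qed

lemma DirProd_nat_pow: "(a, b) [^]\<^bsub>A \<times>\<times> B\<^esub> (n::nat) = (a [^]\<^bsub>A\<^esub> n, b [^]\<^bsub>B\<^esub> n)"
  by (induction n) auto

lemma Cp_times_Cp_pow_p: "x [^]\<^bsub>Cp p \<times>\<times> Cp p\<^esub> p = \<one>\<^bsub>Cp p \<times>\<times> Cp p\<^esub>"
  by (cases x) (simp add: DirProd_nat_pow)

definition intermediate_subgroups :: "('a, 'b) monoid_scheme \<Rightarrow> nat \<Rightarrow> 'a set \<Rightarrow> 'a set \<Rightarrow> 'a set set" where
  "intermediate_subgroups G p L' G' =
     {C'. subgroup C' G \<and> L' \<subset> C' \<and> C' \<subset> G' \<and> card C' = p * card L'}"

locale Cp2_quotient = comm_group G for G (structure) +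
  fixes p :: nat and G' L' :: "'a set"
  assumes prime: "Factorial_Ring.prime p"
    and subgroup_G': "subgroup G' G" and subgroup_L': "subgroup L' G" and L'_psubset: "L' \<subset> G'"
    and finite_G': "finite G'"
    and quotient_iso: "subgroup_generated G G' Mod L' \<cong> Cp p \<times>\<times> Cp p"
begin

abbreviation "H \<equiv> subgroup_generated G G'"
abbreviation "Cs \<equiv> intermediate_subgroups G p L' G'"

lemma p_gt_1: "p > 1" using prime prime_gt_1_nat by blast

lemma carrier_H: "carrier H = G'"
  using subgroup.carrier_subgroup_generated_subgroup[OF subgroup_G'] .

lemma comm_group_H: "comm_group H"
  by (rule abelian_subgroup_generated) (rule comm_group_axioms)

lemma subgroup_L'_H: "subgroup L' H"
  using subgroup_of_subgroup_generated[OF _ subgroup_L'] L'_psubset by blast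

lemma card_G': "card G' = p * p * card L'"
proof -
  interpret H: comm_group H by (rule comm_group_H)
  have "card (rcosets\<^bsub>H\<^esub> L') = p * p"
    using iso_same_card[OF quotient_iso] p_gt_1
    by (simp add: FactGroup_def carrier_integer_mod_group card_cartesian_product)
  then show ?thesis
    using H.lagrange[OF subgroup_L'_H] by (simp add: order_def carrier_H)
qed

lemma pow_p_mem_L':
  assumes g: "g \<in> G'"
  shows "g [^] p \<in> L'"
proof -
  interpret H: comm_group H by (rule comm_group_H)
  interpret N: normal L' H by (rule H.subgroup_imp_normal[OF subgroup_L'_H])
  interpret M: group "H Mod L'" by (rule N.factorgroup_is_group)
  obtain h where h: "h \<in> iso (H Mod L') (Cp p \<times>\<times> Cp p)"
    using quotient_iso by (auto simp: is_iso_def)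
  have gH: "g \<in> carrier H" using g carrier_H by simp
  define c where "c = L' #>\<^bsub>H\<^esub> g"
  have c: "c \<in> carrier (H Mod L')" using gH by (auto simp: c_def FactGroup_def RCOSETS_def)
  have "h (c [^]\<^bsub>H Mod L'\<^esub> p) = h \<one>\<^bsub>H Mod L'\<^esub>"
    using h c hom_nat_pow[of h "H Mod L'" "Cp p \<times>\<times> Cp p" c p]
      hom_one[of h "H Mod L'" "Cp p \<times>\<times> Cp p"]
    by (simp add: iso_def M.is_group DirProd_group Cp_times_Cp_pow_p)
  then have "c [^]\<^bsub>H Mod L'\<^esub> p = \<one>\<^bsub>H Mod L'\<^esub>"
    using h c M.nat_pow_closed[OF c] M.one_closed
    by (metis (no_types, lifting) bij_betw_def inj_onD iso_def mem_Collect_eq)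
  then have "L' #>\<^bsub>H\<^esub> (g [^]\<^bsub>H\<^esub> p) = L'"
    using N.FactGroup_pow[OF gH] by (simp add: c_def)
  then have "g [^]\<^bsub>H\<^esub> p \<in> L'"
    using H.rcos_self[OF _ subgroup_L'_H] gH by (metis H.nat_pow_closed)
  then show ?thesis by (simp add: pow_subgroup_generated)
qed

text \<open>The subgroup generated by L' and g, i.e. L' \<langle>g\<rangle>.\<close>
definition adjoin :: "'a \<Rightarrow> 'a set" where
  "adjoin g = {h \<in> carrier G. \<exists>i::int. h \<otimes> g [^] i \<in> L'}"

lemma L'_subset_G': "L' \<subseteq> G'" using L'_psubset by blast

lemma G'_subset_carrier: "G' \<subseteq> carrier G" using subgroup.subset[OF subgroup_G'] .

lemma finite_L': "finite L'" using finite_subset[OF L'_subset_G' finite_G'] .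

lemma card_L'_pos: "card L' > 0"
  using finite_L' subgroup.one_closed[OF subgroup_L'] card_gt_0_iff by blast

lemma subgroup_adjoin:
  assumes g: "g \<in> carrier G"
  shows "subgroup (adjoin g) G"
proof (rule subgroupI)
  show "adjoin g \<subseteq> carrier G" by (auto simp: adjoin_def)
  have "\<one> \<otimes> g [^] (0::int) \<in> L'" using subgroup.one_closed[OF subgroup_L'] by simp
  then show "adjoin g \<noteq> {}" unfolding adjoin_def by blast
next
  fix h assume "h \<in> adjoin g"
  then obtain i :: int where h: "h \<in> carrier G" "h \<otimes> g [^] i \<in> L'" by (auto simp: adjoin_def)
  have "inv h \<otimes> g [^] (-i) = inv (h \<otimes> g [^] i)"
    using h(1) g by (simp add: inv_mult int_pow_neg)
  also have "\<dots> \<in> L'" using subgroup.m_inv_closed[OF subgroup_L' h(2)] .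
  finally show "inv h \<in> adjoin g" using h(1) by (auto simp: adjoin_def)
next
  fix h1 h2 assume "h1 \<in> adjoin g" "h2 \<in> adjoin g"
  then obtain i1 i2 :: int where h: "h1 \<in> carrier G" "h1 \<otimes> g [^] i1 \<in> L'"
     "h2 \<in> carrier G" "h2 \<otimes> g [^] i2 \<in> L'" by (auto simp: adjoin_def)
  have "(h1 \<otimes> h2) \<otimes> g [^] (i1 + i2) = (h1 \<otimes> g [^] i1) \<otimes> (h2 \<otimes> g [^] i2)"
    using h(1,3) g by (simp add: int_pow_mult m_ac)
  also have "\<dots> \<in> L'" using subgroup.m_closed[OF subgroup_L' h(2,4)] .
  finally show "h1 \<otimes> h2 \<in> adjoin g" using h(1,3) by (auto simp: adjoin_def)
qed

lemma L'_subset_adjoin: "L' \<subseteq> adjoin g"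
proof
  fix l assume l: "l \<in> L'"
  then have "l \<in> carrier G" using subgroup.mem_carrier[OF subgroup_L'] by blast
  then show "l \<in> adjoin g" using l unfolding adjoin_def by (metis (mono_tags) int_pow_0 mem_Collect_eq r_one)
qed

lemma mem_adjoin_self:
  assumes "g \<in> carrier G"
  shows "g \<in> adjoin g"
proof -
  have "g \<otimes> g [^] (-1::int) \<in> L'"
    using assms subgroup.one_closed[OF subgroup_L'] by (simp add: int_pow_neg)
  then show ?thesis using assms unfolding adjoin_def by blast
qed

lemma adjoin_subset:
  assumes C: "subgroup C G" "L' \<subseteq> C" and g: "g \<in> C"
  shows "adjoin g \<subseteq> C"
proof
  fix h assume "h \<in> adjoin g"
  then obtain i :: int where h: "h \<in> carrier G" "h \<otimes> g [^] i \<in> L'" by (auto simp: adjoin_def)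
  have gi: "g [^] i \<in> C" using subgroup_int_pow_closed[OF C(1) g] .
  then have "h = (h \<otimes> g [^] i) \<otimes> inv (g [^] i)"
    using h(1) subgroup.mem_carrier[OF C(1)] by (simp add: m_assoc)
  also have "\<dots> \<in> C"
    using subgroup.m_closed[OF C(1)] subgroup.m_inv_closed[OF C(1) gi] h(2) C(2) by blast
  finally show "h \<in> C" .
qed

lemma adjoin_subset_cosets:
  assumes g: "g \<in> G'"
  shows "adjoin g \<subseteq> (\<Union>j<p. L' #> (g [^] j))"
proof
  fix h assume "h \<in> adjoin g"
  then obtain i :: int where h: "h \<in> carrier G" "h \<otimes> g [^] i \<in> L'" by (auto simp: adjoin_def)
  have gc: "g \<in> carrier G" using g G'_subset_carrier by blast
  define q where "q = (-i) div int p"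
  define j where "j = nat ((-i) mod int p)"
  have "j < p" using p_gt_1 by (simp add: j_def nat_less_iff)
  have "g [^] (-i) = g [^] (int p * q) \<otimes> g [^] (int j)"
    using p_gt_1 gc by (simp add: q_def j_def int_pow_mult[symmetric])
  also have "g [^] (int p * q) = (g [^] p) [^] q"
    using int_pow_pow[OF gc, of "int p" q] by (simp add: int_pow_int)
  finally have gmi: "g [^] (-i) = (g [^] p) [^] q \<otimes> g [^] j"
    by (simp add: int_pow_int)
  have "h = (h \<otimes> g [^] i) \<otimes> g [^] (-i)"
    using h(1) gc by (simp add: m_assoc int_pow_neg)
  also have "\<dots> = ((h \<otimes> g [^] i) \<otimes> (g [^] p) [^] q) \<otimes> g [^] j"
    using gmi h gc by (simp add: m_assoc)
  finally have "h \<in> L' #> g [^] j"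
    using subgroup.m_closed[OF subgroup_L' h(2) subgroup_int_pow_closed[OF subgroup_L' pow_p_mem_L'[OF g]]]
    unfolding r_coset_def by blast
  then show "h \<in> (\<Union>j<p. L' #> (g [^] j))" using \<open>j < p\<close> by blast
qed

lemma adjoin_subset_G':
  assumes "g \<in> G'"
  shows "adjoin g \<subseteq> G'"
  using adjoin_subset[OF subgroup_G' L'_subset_G' assms] .

lemma card_adjoin:
  assumes g: "g \<in> G'" and gL: "g \<notin> L'"
  shows "card (adjoin g) = p * card L'"
proof -
  have gc: "g \<in> carrier G" using g G'_subset_carrier by blast
  have sub: "subgroup (adjoin g) G" using subgroup_adjoin[OF gc] .
  have fin: "finite (adjoin g)" using finite_subset[OF adjoin_subset_G'[OF g] finite_G'] .
  have "card (adjoin g) \<le> card (\<Union>j<p. L' #> (g [^] j))"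
    using adjoin_subset_cosets[OF g] finite_L' by (intro card_mono) (auto simp: r_coset_def)
  also have "\<dots> \<le> (\<Sum>j<p. card (L' #> (g [^] j)))" by (rule card_UN_le) simp
  also have "\<dots> = (\<Sum>j<p. card L')"
    using subgroup.subset[OF subgroup_L'] gc
    by (intro sum.cong refl) (metis card_rcosets_equal rcosetsI nat_pow_closed)
  also have "\<dots> = p * card L'" by simp
  finally have le: "card (adjoin g) \<le> p * card L'" .
  have gt: "card L' < card (adjoin g)"
    using psubset_card_mono[OF fin] L'_subset_adjoin mem_adjoin_self[OF gc] gL by blast
  obtain d where d: "card (adjoin g) = card L' * d"
    using card_subgroup_dvd[OF subgroup_L' sub L'_subset_adjoin] by blast
  have "card L' * d dvd card L' * (p ^ 2)"
    using card_subgroup_dvd[OF sub subgroup_G' adjoin_subset_G'[OF g]] d card_G'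
    by (simp add: power2_eq_square mult.commute mult.left_commute)
  then have "d dvd p ^ 2" using card_L'_pos by simp
  then obtain k where "k \<le> 2" "d = p ^ k" using divides_primepow_nat[OF prime] by blast
  moreover have "1 < d" "d \<le> p" using gt le d card_L'_pos by (auto simp: mult.commute)
  moreover have "p < p * p" using p_gt_1 by simp
  ultimately have "d = p" by (auto simp: le_Suc_eq numeral_2_eq_2)
  then show ?thesis using d by (simp add: mult.commute)
qed

lemma adjoin_mem_intermediate:
  assumes g: "g \<in> G'" and gL: "g \<notin> L'"
  shows "adjoin g \<in> Cs"
proof -
  have gc: "g \<in> carrier G" using g G'_subset_carrier by blast
  have "card (adjoin g) < card G'" using card_adjoin[OF assms] card_G' card_L'_pos p_gt_1 by simp
  then have "adjoin g \<subset> G'" using adjoin_subset_G'[OF g] by auto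
  moreover have "L' \<subset> adjoin g" using L'_subset_adjoin mem_adjoin_self[OF gc] gL by blast
  ultimately show ?thesis
    using subgroup_adjoin[OF gc] card_adjoin[OF assms] by (simp add: intermediate_subgroups_def)
qed

lemma intermediate_eq_adjoin:
  assumes "g \<notin> L'" and C: "C \<in> Cs" and gC: "g \<in> C"
  shows "C = adjoin g"
proof -
  have C': "subgroup C G" "L' \<subseteq> C" "C \<subseteq> G'" "card C = p * card L'"
    using C by (auto simp: intermediate_subgroups_def)
  then have "finite C" using finite_subset finite_G' by blast
  moreover have "adjoin g \<subseteq> C" using adjoin_subset[OF C'(1,2) gC] .
  moreover have "g \<in> G'" using gC C'(3) by blast
  ultimately show ?thesis
    using card_subset_eq card_adjoin[OF _ assms(1)] C'(4) by metis
qed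

lemma finite_intermediate_subgroups: "finite Cs"
  by (rule finite_subset[of _ "Pow G'"]) (use finite_G' in \<open>auto simp: intermediate_subgroups_def\<close>)

text \<open>Each element of G' - L' lies in exactly one intermediate subgroup, and each of those
  contributes (p - 1) |L'| such elements; counting G' - L' gives p + 1 of them.\<close>
lemma card_intermediate_subgroups: "card Cs = p + 1"
proof -
  define m where "m = card L'"
  have cover: "G' - L' = (\<Union>C\<in>Cs. C - L')"
  proof
    show "G' - L' \<subseteq> (\<Union>C\<in>Cs. C - L')"
      using adjoin_mem_intermediate mem_adjoin_self G'_subset_carrier by blast
  qed (auto simp: intermediate_subgroups_def)
  have C_fin: "finite C" if "C \<in> Cs" for C
    using that finite_subset[OF _ finite_G'] by (auto simp: intermediate_subgroups_def)
  have "card (G' - L') = (\<Sum>C\<in>Cs. card (C - L'))"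
    unfolding cover
  proof (rule card_UN_disjoint[OF finite_intermediate_subgroups])
    show "\<forall>C\<in>Cs. finite (C - L')" using C_fin by blast
    show "\<forall>C1\<in>Cs. \<forall>C2\<in>Cs. C1 \<noteq> C2 \<longrightarrow> (C1 - L') \<inter> (C2 - L') = {}"
      using intermediate_eq_adjoin by blast
  qed
  also have "\<dots> = (\<Sum>C\<in>Cs. p * m - m)"
  proof (rule sum.cong[OF refl])
    fix C assume C: "C \<in> Cs"
    then show "card (C - L') = p * m - m"
      using C_fin[OF C] by (auto simp: intermediate_subgroups_def card_Diff_subset m_def finite_subset)
  qed
  finally have "card Cs * (p * m - m) = p * p * m - m"
    using card_Diff_subset[OF finite_L' L'_subset_G'] card_G' by (simp add: m_def)
  moreover have "m \<le> p * m" "m \<le> p * p * m" using p_gt_1 by simp_all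
  ultimately have "int (card Cs) * (int p * int m - int m) = int p * int p * int m - int m"
    by (metis (no_types, lifting) of_nat_diff of_nat_mult)
  then have "int (card Cs) * (int p - 1) * int m = (int p + 1) * (int p - 1) * int m"
    by (simp add: algebra_simps)
  then show ?thesis
    using card_L'_pos p_gt_1 by (simp add: m_def)
qed

lemma card_intermediate_subgroups_containing:
  "card {C \<in> Cs. g \<in> C} = (if g \<in> L' then p + 1 else if g \<in> G' then 1 else 0)"
proof -
  consider "g \<in> L'" | "g \<in> G' - L'" | "g \<notin> G'" using L'_subset_G' by blast
  then show ?thesis
  proof cases
    case 1
    then have "{C \<in> Cs. g \<in> C} = Cs" by (auto simp: intermediate_subgroups_def)
    then show ?thesis using 1 card_intermediate_subgroups by simp
  next
    case 2
    then have "{C \<in> Cs. g \<in> C} = {adjoin g}"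
      using adjoin_mem_intermediate intermediate_eq_adjoin mem_adjoin_self G'_subset_carrier by blast
    then show ?thesis using 2 by simp
  next
    case 3
    then have "{C \<in> Cs. g \<in> C} = {}" by (auto simp: intermediate_subgroups_def)
    then have "card {C \<in> Cs. g \<in> C} = 0" by (simp only: card.empty)
    then show ?thesis using 3 L'_subset_G' by auto
  qed
qed

end

section \<open>The elements \<Theta>\<close>

locale theta_basis = comm_group G for G (structure) +
  fixes p :: nat and L :: "'a set \<Rightarrow> 'a set"
  assumes prime: "Factorial_Ring.prime p"
    and p_group: "p_group G p"
    and L: "\<And>G'. subgroup G' G \<Longrightarrow> \<not> cyclic_group (subgroup_generated G G') \<Longrightarrow>
              subgroup (L G') G \<and> L G' \<subset> G' \<and>
              (subgroup_generated G G') Mod (L G') \<cong> (Cp p \<times>\<times> Cp p)"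
begin

abbreviation "Y \<equiv> G \<times>\<times> Cp p"
abbreviation "homs K \<equiv> homs_to_Cp G p K"
abbreviation "theta \<equiv> \<lambda>(G', \<rho>). Theta G p L G' \<rho>"

lemma p_gt_1: "p > 1" using prime prime_gt_1_nat by blast

lemma finite_carrier: "finite (carrier G)" using p_group by (simp add: p_group_def)

lemma finite_carrier_Y: "finite (carrier Y)"
  using finite_carrier p_gt_1 by (simp add: carrier_integer_mod_group)

lemma comm_group_Y: "comm_group Y"
  by (rule comm_group_DirProd[OF comm_group_axioms comm_group_integer_mod_group])

lemma finite_subgroup: "subgroup K G \<Longrightarrow> finite K"
  using finite_carrier subgroup.subset finite_subset by blast

lemma theta_pairsD:
  assumes "(G', \<rho>) \<in> theta_pairs G p"
  shows "subgroup G' G" "\<not> cyclic_group (subgroup_generated G G')" "\<rho> \<in> homs G'"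
  using assms by (auto simp: theta_pairs_def)

lemma Cp2_quotient_theta_pair:
  assumes "(G', \<rho>) \<in> theta_pairs G p"
  shows "Cp2_quotient G p G' (L G')"
  using theta_pairsD[OF assms] L[of G'] prime finite_subgroup
  by (intro Cp2_quotient.intro comm_group_axioms Cp2_quotient_axioms.intro) auto

lemma Theta_eq:
  "Theta G p L G' \<rho> = (\<lambda>T. bsub (graph_sub (L G') \<rho>) T
      - (\<Sum>C \<in> intermediate_subgroups G p (L G') G'. bsub (graph_sub C \<rho>) T)
      + int p * bsub (graph_sub G' \<rho>) T)"
  by (simp add: Theta_def intermediate_subgroups_def)

lemma finite_theta_pairs: "finite (theta_pairs G p)"
proof -
  let ?F = "{\<rho> :: 'a \<Rightarrow> int. \<forall>x. \<rho> x \<in> {0..<int p} \<and> (x \<notin> carrier G \<longrightarrow> \<rho> x = 0)}"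
  have "?F \<subseteq> (\<lambda>f x. if x \<in> carrier G then f x else 0) ` (carrier G \<rightarrow>\<^sub>E {0..<int p})"
  proof
    fix \<rho> assume "\<rho> \<in> ?F"
    then show "\<rho> \<in> (\<lambda>f x. if x \<in> carrier G then f x else 0) ` (carrier G \<rightarrow>\<^sub>E {0..<int p})"
      by (intro image_eqI[of _ _ "restrict \<rho> (carrier G)"]) (auto simp: fun_eq_iff)
  qed
  then have "finite ?F"
    using finite_subset finite_carrier by (blast intro: finite_PiE)
  moreover have "theta_pairs G p \<subseteq> Pow (carrier G) \<times> ?F"
  proof
    fix q assume "q \<in> theta_pairs G p"
    then obtain K \<rho> where q: "q = (K, \<rho>)" "subgroup K G" "\<rho> \<in> homs K"
      by (auto simp: theta_pairs_def)
    have "\<rho> x \<in> {0..<int p}" for x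
      using q(2,3) p_gt_1 subgroup.carrier_subgroup_generated_subgroup[OF q(2)]
      by (cases "x \<in> K") (auto simp: homs_to_Cp_def hom_def Pi_def carrier_integer_mod_group)
    then show "q \<in> Pow (carrier G) \<times> ?F"
      using q subgroup.subset[OF q(2)] by (auto simp: homs_to_Cp_def)
  qed
  ultimately show ?thesis using finite_carrier finite_subset by blast
qed

definition graph_supported :: "('a set \<Rightarrow> bool) \<Rightarrow> (('a \<times> int) set \<Rightarrow> int) \<Rightarrow> bool" where
  "graph_supported P b \<longleftrightarrow>
     (\<forall>T. b T \<noteq> 0 \<longrightarrow> (\<exists>K \<sigma>. subgroup K G \<and> \<sigma> \<in> homs K \<and> T = graph_sub K \<sigma> \<and> P K))"

lemma graph_supported_combination:
  assumes "graph_supported P b" "\<forall>i\<in>I. graph_supported P (v i)"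
  shows "graph_supported P (\<lambda>T. n * b T - (\<Sum>i\<in>I. v i T))"
  unfolding graph_supported_def
proof (intro allI impI)
  fix T assume "n * b T - (\<Sum>i\<in>I. v i T) \<noteq> 0"
  then have "b T \<noteq> 0 \<or> (\<exists>i\<in>I. v i T \<noteq> 0)"
    by (metis (no_types, lifting) diff_0_right mult_zero_right sum.neutral)
  then show "\<exists>K \<sigma>. subgroup K G \<and> \<sigma> \<in> homs K \<and> T = graph_sub K \<sigma> \<and> P K"
    using assms unfolding graph_supported_def by blast
qed

lemma graph_supported_scale:
  "graph_supported P b \<Longrightarrow> graph_supported P (\<lambda>T. a * b T)"
  unfolding graph_supported_def by simp

lemma graph_supported_mono:
  "graph_supported P b \<Longrightarrow> (\<And>K. subgroup K G \<Longrightarrow> P K \<Longrightarrow> Q K) \<Longrightarrow> graph_supported Q b"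
  unfolding graph_supported_def by blast

lemma rel_burnside_iff: "b \<in> rel_burnside G p \<longleftrightarrow> graph_supported (\<lambda>_. True) b"
  using subgroup_graph_sub_restrict[OF _ _ subset_refl]
  by (auto simp: rel_burnside_def burnside_def graph_supported_def)

lemma Theta_graph_supported:
  assumes P: "(G', \<rho>) \<in> theta_pairs G p"
  shows "graph_supported (\<lambda>K. card K \<le> card G') (Theta G p L G' \<rho>)"
  unfolding graph_supported_def
proof (intro allI impI)
  interpret Q: Cp2_quotient G p G' "L G'" by (rule Cp2_quotient_theta_pair[OF P])
  fix T assume nz: "Theta G p L G' \<rho> T \<noteq> 0"
  have "\<exists>K. subgroup K G \<and> K \<subseteq> G' \<and> T = graph_sub K \<rho>"
  proof (rule ccontr)
    assume "\<not> ?thesis"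
    then have "bsub (graph_sub K \<rho>) T = 0" if "subgroup K G" "K \<subseteq> G'" for K
      using that by (auto simp: bsub_def)
    then have "Theta G p L G' \<rho> T = 0"
      using Q.subgroup_L' Q.L'_psubset Q.subgroup_G'
      by (simp add: Theta_eq intermediate_subgroups_def psubset_imp_subset)
    then show False using nz by simp
  qed
  then obtain K where K: "subgroup K G" "K \<subseteq> G'" "T = graph_sub K \<rho>"
    by blast
  moreover obtain \<sigma> where "\<sigma> \<in> homs K" "T = graph_sub K \<sigma>"
    using homs_to_Cp_restrict[OF K(1) Q.subgroup_G' K(2) theta_pairsD(3)[OF P]] K(3) by metis
  moreover have "card K \<le> card G'" using card_mono[OF Q.finite_G' K(2)] .
  ultimately show "\<exists>K \<sigma>. subgroup K G \<and> \<sigma> \<in> homs K \<and> T = graph_sub K \<sigma> \<and> card K \<le> card G'"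
    by blast
qed

lemma Theta_graph_sub:
  assumes P: "(G', \<rho>) \<in> theta_pairs G p" and \<sigma>: "\<sigma> \<in> homs K"
    and le: "card G' \<le> card K"
  shows "Theta G p L G' \<rho> (graph_sub K \<sigma>) = (if K = G' \<and> \<sigma> = \<rho> then int p else 0)"
proof -
  interpret Q: Cp2_quotient G p G' "L G'" by (rule Cp2_quotient_theta_pair[OF P])
  have other: "bsub (graph_sub K' \<rho>) (graph_sub K \<sigma>) = 0" if "K' \<subset> G'" for K'
  proof -
    have "card K' < card G'" using psubset_card_mono[OF Q.finite_G' that] .
    then have "K' \<noteq> K" using le by auto
    then show ?thesis by (auto simp: bsub_def dest: arg_cong[of _ _ "image fst"] simp: fst_graph_sub)
  qed
  have "bsub (graph_sub G' \<rho>) (graph_sub K \<sigma>) = (if K = G' \<and> \<sigma> = \<rho> then 1 else 0)"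
    using graph_sub_homs_to_Cp_eq_iff[OF theta_pairsD(3)[OF P] \<sigma>] by (auto simp: bsub_def)
  then show ?thesis
    using other Q.L'_psubset by (simp add: Theta_eq intermediate_subgroups_def)
qed

lemma sum_Theta_times:
  assumes P: "(G', \<rho>) \<in> theta_pairs G p"
  shows "(\<Sum>S\<in>{S. subgroup S Y}. Theta G p L G' \<rho> S * f S) =
           f (graph_sub (L G') \<rho>)
           - (\<Sum>C\<in>intermediate_subgroups G p (L G') G'. f (graph_sub C \<rho>))
           + int p * f (graph_sub G' \<rho>)"
proof -
  interpret Q: Cp2_quotient G p G' "L G'" by (rule Cp2_quotient_theta_pair[OF P])
  have \<rho>: "\<rho> \<in> homs G'" using theta_pairsD(3)[OF P] .
  have sub: "subgroup (graph_sub K \<rho>) Y" if "subgroup K G" "K \<subseteq> G'" for K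
    using subgroup_graph_sub_restrict[OF that(1) Q.subgroup_G' that(2) \<rho>] .
  have "(\<Sum>S\<in>{S. subgroup S Y}. Theta G p L G' \<rho> S * f S) =
     (\<Sum>S\<in>{S. subgroup S Y}. bsub (graph_sub (L G') \<rho>) S * f S)
     - (\<Sum>C\<in>Q.Cs. \<Sum>S\<in>{S. subgroup S Y}. bsub (graph_sub C \<rho>) S * f S)
     + int p * (\<Sum>S\<in>{S. subgroup S Y}. bsub (graph_sub G' \<rho>) S * f S)"
    unfolding Theta_eq
    by (simp add: algebra_simps sum.distrib sum_subtractf sum_distrib_left sum_distrib_right
        sum.swap[of _ "{S. subgroup S Y}"])
  also have "(\<Sum>C\<in>Q.Cs. \<Sum>S\<in>{S. subgroup S Y}. bsub (graph_sub C \<rho>) S * f S) =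
      (\<Sum>C\<in>Q.Cs. f (graph_sub C \<rho>))"
    using sum_subgroups_bsub[OF finite_carrier_Y sub]
    by (intro sum.cong refl) (auto simp: intermediate_subgroups_def)
  finally show ?thesis
    using sum_subgroups_bsub[OF finite_carrier_Y sub] Q.subgroup_L' Q.L'_subset_G' Q.subgroup_G'
    by simp
qed

lemma Theta_char_eq_0:
  assumes P: "(G', \<rho>) \<in> theta_pairs G p" and x: "(g, t) \<in> carrier Y"
  shows "(\<Sum>S\<in>{S. subgroup S Y}. Theta G p L G' \<rho> S * int (perm_char Y S (g, t))) = 0"
proof -
  interpret Q: Cp2_quotient G p G' "L G'" by (rule Cp2_quotient_theta_pair[OF P])
  have \<rho>: "\<rho> \<in> homs G'" using theta_pairsD(3)[OF P] .
  define f where "f S = int (perm_char Y S (g, t))" for S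
  define \<chi> where "\<chi> K = (if g \<in> K \<and> t = \<rho> g then 1 else 0 :: int)" for K
  define N where "N = int (order Y)"
  define m where "m = int (card (L G'))"
  have f_graph: "f (graph_sub K \<rho>) * int (card K) = \<chi> K * N" if "subgroup K G" "K \<subseteq> G'" for K
    using perm_char_graph_sub[OF that(1) Q.subgroup_G' that(2) \<rho> x] by (simp add: f_def \<chi>_def N_def)
  have fL: "f (graph_sub (L G') \<rho>) * m = \<chi> (L G') * N"
    using f_graph[OF Q.subgroup_L' Q.L'_subset_G'] by (simp add: m_def)
  have fC: "f (graph_sub C \<rho>) * (int p * m) = \<chi> C * N" if "C \<in> Q.Cs" for C
  proof -
    have C: "subgroup C G" "C \<subseteq> G'" "card C = p * card (L G')"
      using that by (auto simp: intermediate_subgroups_def)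
    then show ?thesis using f_graph[OF C(1,2)] by (simp add: m_def)
  qed
  have fG: "f (graph_sub G' \<rho>) * (int p * int p * m) = \<chi> G' * N"
    using f_graph[OF Q.subgroup_G' subset_refl] Q.card_G' by (simp add: m_def)
  have count: "(\<Sum>C\<in>Q.Cs. \<chi> C) = (if t = \<rho> g then int (card {C \<in> Q.Cs. g \<in> C}) else 0)"
    using Q.finite_intermediate_subgroups by (simp add: \<chi>_def sum.If_cases Int_def)
  have "int p * \<chi> (L G') - (\<Sum>C\<in>Q.Cs. \<chi> C) + \<chi> G' = 0"
    unfolding count Q.card_intermediate_subgroups_containing using Q.L'_subset_G'
    by (auto simp: \<chi>_def)
  have "(f (graph_sub (L G') \<rho>) - (\<Sum>C\<in>Q.Cs. f (graph_sub C \<rho>)) + int p * f (graph_sub G' \<rho>))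
          * (int p * int p * m)
        = int p * int p * (f (graph_sub (L G') \<rho>) * m)
          - int p * (\<Sum>C\<in>Q.Cs. f (graph_sub C \<rho>) * (int p * m))
          + int p * (f (graph_sub G' \<rho>) * (int p * int p * m))"
    by (simp add: algebra_simps sum_distrib_left sum_distrib_right)
  also have "\<dots> = int p * int p * (\<chi> (L G') * N) - int p * (\<Sum>C\<in>Q.Cs. \<chi> C * N)
                    + int p * (\<chi> G' * N)"
    by (simp only: fL fG sum.cong[OF refl fC])
  also have "\<dots> = int p * N * (int p * \<chi> (L G') - (\<Sum>C\<in>Q.Cs. \<chi> C) + \<chi> G')"
    by (simp add: algebra_simps sum_distrib_left sum_distrib_right)
  also have "\<dots> = 0" using \<open>int p * \<chi> (L G') - (\<Sum>C\<in>Q.Cs. \<chi> C) + \<chi> G' = 0\<close> by simp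
  finally have "(f (graph_sub (L G') \<rho>) - (\<Sum>C\<in>Q.Cs. f (graph_sub C \<rho>)) + int p * f (graph_sub G' \<rho>))
              * (int p * int p * m) = 0" .
  moreover have "int p * int p * m \<noteq> 0" using p_gt_1 Q.card_L'_pos by (simp add: m_def)
  ultimately show ?thesis
    using sum_Theta_times[OF P, of f] by (simp add: f_def)
qed

lemma Theta_mem_rel_brauer:
  assumes P: "(G', \<rho>) \<in> theta_pairs G p"
  shows "Theta G p L G' \<rho> \<in> rel_brauer G p"
proof -
  have "Theta G p L G' \<rho> \<in> rel_burnside G p"
    using graph_supported_mono[OF Theta_graph_supported[OF P]] by (simp add: rel_burnside_iff)
  moreover have "Theta G p L G' \<rho> \<in> brauer_rel Y"
    using calculation Theta_char_eq_0[OF P]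
    by (auto simp: rel_burnside_def brauer_rel_def)
  ultimately show ?thesis by (simp add: rel_brauer_def)
qed

lemma theta_triangular:
  assumes i: "i \<in> theta_pairs G p" and j: "j \<in> theta_pairs G p"
    and le: "card (fst i) \<le> card (fst j)"
  shows "theta i (case_prod graph_sub j) = (if i = j then int p else 0)"
proof -
  obtain G' \<rho> K \<sigma> where ij: "i = (G', \<rho>)" "j = (K, \<sigma>)" by fastforce
  show ?thesis
    using Theta_graph_sub[of G' \<rho> \<sigma> K] i j le theta_pairsD(3)[of K \<sigma>] by (simp add: ij)
qed

lemma theta_indep: "int_lin_indep_fam (theta_pairs G p) theta"
proof (rule int_lin_indep_fam_triangular[where w = "\<lambda>q. card (fst q)" and e = "case_prod graph_sub"])
  show "int p \<noteq> 0" using p_gt_1 by simp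
qed (use finite_theta_pairs theta_triangular in auto)

lemma sum_theta_graph_sub:
  assumes K: "(K, \<sigma>) \<in> theta_pairs G p"
    and c: "\<And>q. q \<in> theta_pairs G p \<Longrightarrow> c q \<noteq> 0 \<Longrightarrow> card (fst q) \<le> card K"
  shows "(\<Sum>q\<in>theta_pairs G p. c q * theta q (graph_sub K \<sigma>)) = c (K, \<sigma>) * int p"
  using sum_triangular[where w = "\<lambda>q. card (fst q)" and e = "case_prod graph_sub"
      and v = theta and d = "int p", OF finite_theta_pairs K theta_triangular[OF _ K]] c
  by simp

lemma theta_graph_supported:
  "q \<in> theta_pairs G p \<Longrightarrow> graph_supported (\<lambda>K. card K \<le> card (fst q)) (theta q)"
  using Theta_graph_supported[of "fst q" "snd q"] by (simp add: split_def)

text \<open>Subtracting the multiples of \<Theta> that cancel a relation on the non-cyclic graphs of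
  order n costs a factor p, since \<Theta>_{K,\<sigma>}(K \<times> \<sigma>) = p.\<close>
lemma reduce_top_layer:
  assumes b: "graph_supported (\<lambda>K. cyclic_group (subgroup_generated G K) \<or> card K < Suc n) b"
  shows "\<exists>c. graph_supported (\<lambda>K. cyclic_group (subgroup_generated G K) \<or> card K < n)
               (\<lambda>T. int p * b T - (\<Sum>q\<in>theta_pairs G p. c q * theta q T))"
proof -
  define c where "c q = (if card (fst q) = n then b (case_prod graph_sub q) else 0)" for q
  define b' where "b' = (\<lambda>T. int p * b T - (\<Sum>q\<in>theta_pairs G p. c q * theta q T))"
  have b'_top: "b' (graph_sub K \<sigma>) = 0" if K: "(K, \<sigma>) \<in> theta_pairs G p" "card K = n" for K \<sigma>
  proof -
    have "(\<Sum>q\<in>theta_pairs G p. c q * theta q (graph_sub K \<sigma>)) = c (K, \<sigma>) * int p"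
    proof (rule sum_theta_graph_sub[OF K(1)])
      fix q assume "q \<in> theta_pairs G p" "c q \<noteq> 0"
      then show "card (fst q) \<le> card K"
        using K(2) by (cases "card (fst q) = n") (simp_all add: c_def)
    qed
    moreover have "c (K, \<sigma>) = b (graph_sub K \<sigma>)" using K(2) by (simp add: c_def)
    ultimately show ?thesis by (simp add: b'_def)
  qed
  let ?P = "\<lambda>K. cyclic_group (subgroup_generated G K) \<or> card K \<le> n"
  have theta_supp: "graph_supported ?P (\<lambda>T. c q * theta q T)" if q: "q \<in> theta_pairs G p" for q
  proof (cases "card (fst q) = n")
    case True
    have "graph_supported ?P (theta q)"
      by (rule graph_supported_mono[OF theta_graph_supported[OF q]]) (simp add: True)
    then show ?thesis by (rule graph_supported_scale)
  next
    case False
    then have "(\<lambda>T. c q * theta q T) = (\<lambda>_. 0)" by (simp add: c_def)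
    then show ?thesis by (simp add: graph_supported_def)
  qed
  have "graph_supported ?P b" by (rule graph_supported_mono[OF b]) auto
  then have b'_supp: "graph_supported ?P b'"
    unfolding b'_def by (rule graph_supported_combination) (use theta_supp in blast)
  have "graph_supported (\<lambda>K. cyclic_group (subgroup_generated G K) \<or> card K < n) b'"
    unfolding graph_supported_def
  proof (intro allI impI)
    fix T assume "b' T \<noteq> 0"
    then obtain K \<sigma> where K: "subgroup K G" "\<sigma> \<in> homs K" "T = graph_sub K \<sigma>" "?P K"
      using b'_supp unfolding graph_supported_def by blast
    have "cyclic_group (subgroup_generated G K) \<or> card K < n"
    proof (rule ccontr)
      assume "\<not> ?thesis"
      then have "(K, \<sigma>) \<in> theta_pairs G p" "card K = n" using K by (auto simp: theta_pairs_def)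
      then show False using b'_top \<open>b' T \<noteq> 0\<close> K(3) by simp
    qed
    then show "\<exists>K \<sigma>. subgroup K G \<and> \<sigma> \<in> homs K \<and> T = graph_sub K \<sigma> \<and>
        (cyclic_group (subgroup_generated G K) \<or> card K < n)"
      using K by blast
  qed
  then show ?thesis unfolding b'_def by blast
qed

lemma reduce_to_cyclic:
  assumes "graph_supported (\<lambda>K. cyclic_group (subgroup_generated G K) \<or> card K < n) b"
  shows "\<exists>k c. graph_supported (\<lambda>K. cyclic_group (subgroup_generated G K))
                 (\<lambda>T. int p ^ k * b T - (\<Sum>q\<in>theta_pairs G p. c q * theta q T))"
  using assms
proof (induction n arbitrary: b)
  case 0
  then show ?case by (intro exI[of _ 0] exI[of _ "\<lambda>_. 0"]) (simp add: graph_supported_def)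
next
  case (Suc n)
  obtain c1 where "graph_supported (\<lambda>K. cyclic_group (subgroup_generated G K) \<or> card K < n)
                     (\<lambda>T. int p * b T - (\<Sum>q\<in>theta_pairs G p. c1 q * theta q T))"
    using reduce_top_layer[OF Suc.prems] by blast
  from Suc.IH[OF this] obtain k c where
    "graph_supported (\<lambda>K. cyclic_group (subgroup_generated G K))
       (\<lambda>T. int p ^ k * (int p * b T - (\<Sum>q\<in>theta_pairs G p. c1 q * theta q T))
             - (\<Sum>q\<in>theta_pairs G p. c q * theta q T))"
    by blast
  moreover have "(\<lambda>T. int p ^ k * (int p * b T - (\<Sum>q\<in>theta_pairs G p. c1 q * theta q T))
             - (\<Sum>q\<in>theta_pairs G p. c q * theta q T)) =
      (\<lambda>T. int p ^ Suc k * b T - (\<Sum>q\<in>theta_pairs G p. (c q + int p ^ k * c1 q) * theta q T))"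
    by (simp add: algebra_simps sum.distrib sum_distrib_left)
  ultimately show ?case
    by (intro exI[of _ "Suc k"] exI[of _ "\<lambda>q. c q + int p ^ k * c1 q"]) simp
qed

lemma rel_brauer_spanned:
  assumes b: "b \<in> rel_brauer G p"
  shows "\<exists>k c. \<forall>T. int p ^ k * b T = (\<Sum>q\<in>theta_pairs G p. c q * theta q T)"
proof -
  have "graph_supported (\<lambda>_. True) b"
    using b by (simp add: rel_brauer_def rel_burnside_iff)
  then have "graph_supported (\<lambda>K. cyclic_group (subgroup_generated G K) \<or> card K < Suc (card (carrier G))) b"
    by (rule graph_supported_mono)
       (simp add: le_imp_less_Suc card_mono[OF finite_carrier subgroup.subset])
  then obtain k c where cyclic: "graph_supported (\<lambda>K. cyclic_group (subgroup_generated G K))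
      (\<lambda>T. int p ^ k * b T - (\<Sum>q\<in>theta_pairs G p. c q * theta q T))"
    using reduce_to_cyclic by blast
  define r where "r T = int p ^ k * b T - (\<Sum>q\<in>theta_pairs G p. c q * theta q T)" for T
  interpret Y: comm_group Y by (rule comm_group_Y)
  have "r \<in> brauer_rel Y"
    unfolding r_def
    using b Theta_mem_rel_brauer
    by (intro brauer_rel_combination) (auto simp: rel_brauer_def theta_pairs_def)
  moreover have "\<exists>x\<in>carrier Y. T = range (\<lambda>n::int. x [^]\<^bsub>Y\<^esub> n)" if "r T \<noteq> 0" for T
  proof -
    have "int p ^ k * b T - (\<Sum>q\<in>theta_pairs G p. c q * theta q T) \<noteq> 0"
      using that by (simp add: r_def)
    then obtain K \<sigma> where "subgroup K G" "\<sigma> \<in> homs K" "T = graph_sub K \<sigma>"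
      "cyclic_group (subgroup_generated G K)"
      using cyclic unfolding graph_supported_def by blast
    then show ?thesis
      using graph_sub_cyclic[OF group_integer_mod_group] by (simp add: homs_to_Cp_def)
  qed
  ultimately have "r T = 0" for T
    using Y.brauer_rel_cyclic_support_eq_0[OF finite_carrier_Y] by blast
  then show ?thesis by (auto simp: r_def)
qed

lemma zrank_rel_brauer: "zrank (rel_brauer G p) = card (theta_pairs G p)"
proof (rule zrank_eq_card[OF finite_theta_pairs _ theta_indep])
  show "theta ` theta_pairs G p \<subseteq> rel_brauer G p"
  proof (rule image_subsetI)
    fix q assume "q \<in> theta_pairs G p"
    then show "theta q \<in> rel_brauer G p" using Theta_mem_rel_brauer by (cases q) simp
  qed
  fix b assume "b \<in> rel_brauer G p"
  then obtain k c where "\<forall>T. int p ^ k * b T = (\<Sum>q\<in>theta_pairs G p. c q * theta q T)"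
    using rel_brauer_spanned by blast
  moreover have "int p ^ k \<noteq> 0" using p_gt_1 by simp
  ultimately show "\<exists>n c. n \<noteq> 0 \<and> (\<forall>T. n * b T = (\<Sum>q\<in>theta_pairs G p. c q * theta q T))"
    by blast
qed

end

theorem theorem5p5:
  fixes G :: "('a, 'b) monoid_scheme" and p :: nat and L :: "'a set \<Rightarrow> 'a set"
  assumes "Factorial_Ring.prime p"
    and "comm_group G"
    and "p_group G p"
    and L: "\<And>G'. subgroup G' G \<Longrightarrow> \<not> cyclic_group (subgroup_generated G G') \<Longrightarrow>
              subgroup (L G') G \<and> L G' \<subset> G' \<and>
              (subgroup_generated G G') Mod (L G') \<cong> (Cp p \<times>\<times> Cp p)"
  shows "(\<forall>(G', \<rho>) \<in> theta_pairs G p. Theta G p L G' \<rho> \<in> rel_brauer G p)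
       \<and> int_lin_indep_fam (theta_pairs G p) (\<lambda>(G', \<rho>). Theta G p L G' \<rho>)
       \<and> (\<forall>b \<in> rel_brauer G p. \<exists>(k::nat) c. \<forall>T.
            int p ^ k * b T = (\<Sum>(G', \<rho>) \<in> theta_pairs G p. c (G', \<rho>) * Theta G p L G' \<rho> T))
       \<and> zrank (rel_brauer G p) = card (theta_pairs G p)"
proof -
  interpret theta_basis G p L
    using assms by (intro theta_basis.intro theta_basis_axioms.intro) auto
  have sum_eq: "(\<Sum>q\<in>theta_pairs G p. c q * theta q T) =
      (\<Sum>(G', \<rho>) \<in> theta_pairs G p. c (G', \<rho>) * Theta G p L G' \<rho> T)" for c T
    by (simp add: split_def)
  have "\<forall>b \<in> rel_brauer G p. \<exists>(k::nat) c. \<forall>T.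
      int p ^ k * b T = (\<Sum>(G', \<rho>) \<in> theta_pairs G p. c (G', \<rho>) * Theta G p L G' \<rho> T)"
    using rel_brauer_spanned unfolding sum_eq by blast
  then show ?thesis using Theta_mem_rel_brauer theta_indep zrank_rel_brauer by blast
qed

end
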